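(* Let $q$ be a prime power and $n\ge k\ge0$ integers. Let $V_1,\dots,V_k$ be subspaces of $\mathbb{F}_q^n$ such that $\dim\big(\sum_{i\in\Omega}V_i\big)\ge n-k+|\Omega|$ for all nonempty $\Omega\subseteq[k]$. Then there exist subspaces $V_i'\subseteq V_i$, $i=1,\dots,k$, such that (1) $\dim\big(\sum_{i\in\Omega}V_i'\big)\ge n-k+|\Omega|$ for all nonempty $\Omega\subseteq[k]$, and (2) $\dim V_i'=n-k+1$ for all $i\in[k]$. *)

theory Defs
  imports "HOL-Analysis.Analysis"
begin

end

theory Submission
  imports Defs
begin

text \<open>Write \<open>m = n - k\<close> and call \<open>\<Omega>\<close> tight if the sum of the \<open>V j\<close>, \<open>j \<in> \<Omega>\<close>, has
  dimension exactly \<open>m + |\<Omega>|\<close>. It suffices to lower by one the dimension of a single \<open>V i\<close>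
  with \<open>dim (V i) > m + 1\<close> while keeping the condition. By submodularity of the dimension,
  the tight sets containing \<open>i\<close> are closed under intersection, so there is a least one,
  \<open>\<Omega>\<^sub>0\<close>, and counting dimensions shows that \<open>V i\<close> meets the sum of the \<open>V j\<close>,
  \<open>j \<in> \<Omega>\<^sub>0 - {i}\<close>, in some \<open>u \<noteq> 0\<close>. Replacing \<open>V i\<close> by a hyperplane of \<open>V i\<close> that
  avoids \<open>u\<close> loses at most one dimension in every sum, and none in the sums over tight sets
  containing \<open>i\<close>, since these still contain \<open>u\<close>.\<close>

lemma dim_Un_add_dim_span_Int:
  fixes S T :: "('a::field ^ 'n) set"
  shows "vec.dim (S \<union> T) + vec.dim (vec.span S \<inter> vec.span T) = vec.dim S + vec.dim T"
proof -
  have "vec.dim (S \<union> T) = vec.dim {x + y |x y. x \<in> vec.span S \<and> y \<in> vec.span T}"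
    by (simp flip: vec.span_Un)
  then show ?thesis
    using vec.dim_sums_Int[OF vec.subspace_span vec.subspace_span, of S T] by simp
qed

lemma subspace_split_off_vector:
  fixes V :: "('a::field ^ 'n) set"
  assumes "vec.subspace V" "u \<in> V" "u \<noteq> 0"
  obtains H where "vec.subspace H" "H \<subseteq> V" "u \<notin> H" "V \<subseteq> vec.span (insert u H)"
proof -
  have "vec.independent {u}"
    using vec.independent_insertI[of u "{}"] assms(3) by simp
  then obtain B where B: "{u} \<subseteq> B" "B \<subseteq> V" "vec.independent B" "V \<subseteq> vec.span B"
    using vec.maximal_independent_subset_extend[of "{u}" V] assms(2) by blast
  let ?H = "vec.span (B - {u})"
  have "u \<notin> ?H" using B(1,3) unfolding vec.dependent_def by blast
  moreover have "?H \<subseteq> V"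
    using B(2) assms(1) by (meson Diff_subset order_trans vec.span_minimal)
  moreover have "B \<subseteq> insert u ?H" using vec.span_superset[of "B - {u}"] by blast
  then have "V \<subseteq> vec.span (insert u ?H)" using B(4) vec.span_mono by blast
  ultimately show ?thesis using that vec.subspace_span by blast
qed

definition dim_hall :: "nat \<Rightarrow> 'i set \<Rightarrow> ('i \<Rightarrow> ('a::field ^ 'n) set) \<Rightarrow> bool" where
  "dim_hall m I V \<longleftrightarrow> (\<forall>\<Omega>\<subseteq>I. \<Omega> \<noteq> {} \<longrightarrow> m + card \<Omega> \<le> vec.dim (\<Union>j\<in>\<Omega>. V j))"

definition tight :: "nat \<Rightarrow> ('i \<Rightarrow> ('a::field ^ 'n) set) \<Rightarrow> 'i set \<Rightarrow> bool" where
  "tight m V \<Omega> \<longleftrightarrow> vec.dim (\<Union>j\<in>\<Omega>. V j) = m + card \<Omega>"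

lemma dim_hallD:
  "dim_hall m I V \<Longrightarrow> \<Omega> \<subseteq> I \<Longrightarrow> \<Omega> \<noteq> {} \<Longrightarrow> m + card \<Omega> \<le> vec.dim (\<Union>j\<in>\<Omega>. V j)"
  unfolding dim_hall_def by blast

lemma dim_hall_tight_Int:
  assumes hall: "dim_hall m I V" and "finite I" and sub: "\<Omega>\<^sub>1 \<subseteq> I" "\<Omega>\<^sub>2 \<subseteq> I"
    and meet: "\<Omega>\<^sub>1 \<inter> \<Omega>\<^sub>2 \<noteq> {}" and tight: "tight m V \<Omega>\<^sub>1" "tight m V \<Omega>\<^sub>2"
  shows "tight m V (\<Omega>\<^sub>1 \<inter> \<Omega>\<^sub>2)"
proof -
  define U where "U \<Omega> = (\<Union>j\<in>\<Omega>. V j)" for \<Omega>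
  have fin: "finite \<Omega>\<^sub>1" "finite \<Omega>\<^sub>2" using sub \<open>finite I\<close> finite_subset by auto
  have "U (\<Omega>\<^sub>1 \<inter> \<Omega>\<^sub>2) \<subseteq> vec.span (U \<Omega>\<^sub>1) \<inter> vec.span (U \<Omega>\<^sub>2)"
    unfolding U_def using vec.span_superset by blast
  then have "vec.dim (U (\<Omega>\<^sub>1 \<inter> \<Omega>\<^sub>2)) \<le> vec.dim (vec.span (U \<Omega>\<^sub>1) \<inter> vec.span (U \<Omega>\<^sub>2))"
    by (rule vec.dim_subset)
  moreover have "U \<Omega>\<^sub>1 \<union> U \<Omega>\<^sub>2 = U (\<Omega>\<^sub>1 \<union> \<Omega>\<^sub>2)" unfolding U_def by blast
  then have "vec.dim (U (\<Omega>\<^sub>1 \<union> \<Omega>\<^sub>2)) + vec.dim (vec.span (U \<Omega>\<^sub>1) \<inter> vec.span (U \<Omega>\<^sub>2))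
      = vec.dim (U \<Omega>\<^sub>1) + vec.dim (U \<Omega>\<^sub>2)"
    using dim_Un_add_dim_span_Int[of "U \<Omega>\<^sub>1" "U \<Omega>\<^sub>2"] by (simp only:)
  moreover have "m + card (\<Omega>\<^sub>1 \<union> \<Omega>\<^sub>2) \<le> vec.dim (U (\<Omega>\<^sub>1 \<union> \<Omega>\<^sub>2))"
    unfolding U_def by (rule dim_hallD[OF hall]) (use sub meet in auto)
  moreover have "m + card (\<Omega>\<^sub>1 \<inter> \<Omega>\<^sub>2) \<le> vec.dim (U (\<Omega>\<^sub>1 \<inter> \<Omega>\<^sub>2))"
    unfolding U_def by (rule dim_hallD[OF hall]) (use sub meet in auto)
  moreover have "card (\<Omega>\<^sub>1 \<union> \<Omega>\<^sub>2) + card (\<Omega>\<^sub>1 \<inter> \<Omega>\<^sub>2) = card \<Omega>\<^sub>1 + card \<Omega>\<^sub>2"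
    using card_Un_Int[OF fin] by simp
  ultimately show ?thesis using tight unfolding tight_def U_def by linarith
qed

lemma dim_hall_least_tight:
  assumes hall: "dim_hall m I V" and "finite I"
    and \<Omega>: "\<Omega> \<subseteq> I" "i \<in> \<Omega>" "tight m V \<Omega>"
  obtains \<Omega>\<^sub>0 where "\<Omega>\<^sub>0 \<subseteq> I" "i \<in> \<Omega>\<^sub>0" "tight m V \<Omega>\<^sub>0"
    "\<And>\<Omega>'. \<Omega>' \<subseteq> I \<Longrightarrow> i \<in> \<Omega>' \<Longrightarrow> tight m V \<Omega>' \<Longrightarrow> \<Omega>\<^sub>0 \<subseteq> \<Omega>'"
proof -
  define T where "T \<Omega>' \<longleftrightarrow> \<Omega>' \<subseteq> I \<and> i \<in> \<Omega>' \<and> tight m V \<Omega>'" for \<Omega>'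
  have "T \<Omega>" unfolding T_def using \<Omega> by blast
  then obtain \<Omega>\<^sub>0 where "T \<Omega>\<^sub>0" and least: "\<And>\<Omega>'. T \<Omega>' \<Longrightarrow> card \<Omega>\<^sub>0 \<le> card \<Omega>'"
    using ex_has_least_nat[of T \<Omega> card] by blast
  then have \<Omega>\<^sub>0: "\<Omega>\<^sub>0 \<subseteq> I" "i \<in> \<Omega>\<^sub>0" "tight m V \<Omega>\<^sub>0" unfolding T_def by auto
  have "finite \<Omega>\<^sub>0" using \<Omega>\<^sub>0(1) \<open>finite I\<close> finite_subset by blast
  have "\<Omega>\<^sub>0 \<subseteq> \<Omega>'" if "\<Omega>' \<subseteq> I" "i \<in> \<Omega>'" "tight m V \<Omega>'" for \<Omega>'
  proof -
    have "tight m V (\<Omega>\<^sub>0 \<inter> \<Omega>')"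
      using dim_hall_tight_Int[OF hall \<open>finite I\<close> \<Omega>\<^sub>0(1) that(1) _ \<Omega>\<^sub>0(3) that(3)] \<Omega>\<^sub>0(2) that(2)
      by blast
    then have "T (\<Omega>\<^sub>0 \<inter> \<Omega>')" unfolding T_def using \<Omega>\<^sub>0(1,2) that(2) by blast
    then have "card \<Omega>\<^sub>0 \<le> card (\<Omega>\<^sub>0 \<inter> \<Omega>')" by (rule least)
    then have "\<Omega>\<^sub>0 \<inter> \<Omega>' = \<Omega>\<^sub>0" using card_subset_eq[OF \<open>finite \<Omega>\<^sub>0\<close>, of "\<Omega>\<^sub>0 \<inter> \<Omega>'"]
        card_mono[OF \<open>finite \<Omega>\<^sub>0\<close>, of "\<Omega>\<^sub>0 \<inter> \<Omega>'"] by simp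
    then show ?thesis by blast
  qed
  with \<Omega>\<^sub>0 that show ?thesis by blast
qed

lemma tight_meets_span_of_others:
  assumes hall: "dim_hall m I V" and \<Omega>: "\<Omega> \<subseteq> I" "finite \<Omega>" "i \<in> \<Omega>" "tight m V \<Omega>"
    and Vi: "vec.subspace (V i)" "m + 1 < vec.dim (V i)"
  obtains u where "u \<in> V i" "u \<noteq> 0" "u \<in> vec.span (\<Union>j\<in>\<Omega>-{i}. V j)"
proof (rule ccontr)
  assume no_u: "\<not> thesis"
  define W where "W = (\<Union>j\<in>\<Omega>-{i}. V j)"
  have "vec.span (V i) \<inter> vec.span W \<subseteq> {0}"
    using no_u that vec.span_eq_iff[of "V i"] Vi(1) unfolding W_def by blast
  then have "vec.dim (vec.span (V i) \<inter> vec.span W) = 0" by simp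
  then have "vec.dim (V i \<union> W) = vec.dim (V i) + vec.dim W"
    using dim_Un_add_dim_span_Int[of "V i" W] by linarith
  moreover have "(\<Union>j\<in>\<Omega>. V j) = V i \<union> W" unfolding W_def using \<Omega>(3) by blast
  ultimately have "vec.dim (\<Union>j\<in>\<Omega>. V j) = vec.dim (V i) + vec.dim W" by simp
  moreover have "\<Omega> - {i} \<noteq> {}"
  proof
    assume "\<Omega> - {i} = {}"
    then have "\<Omega> = {i}" using \<Omega>(3) by blast
    then show False using \<Omega>(4) Vi(2) unfolding tight_def by simp
  qed
  then have "m + card (\<Omega> - {i}) \<le> vec.dim W"
    unfolding W_def by (rule dim_hallD[OF hall, rotated]) (use \<Omega>(1) in blast)
  moreover have "card (\<Omega> - {i}) + 1 = card \<Omega>" using \<Omega>(2,3) card_Suc_Diff1 by fastforce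
  ultimately show False using \<Omega>(4) Vi(2) unfolding tight_def by linarith
qed

lemma dim_hall_common_vector:
  assumes hall: "dim_hall m I V" and "finite I"
    and Vi: "vec.subspace (V i)" "m + 1 < vec.dim (V i)"
  obtains u where "u \<in> V i" "u \<noteq> 0"
    "\<And>\<Omega>. \<Omega> \<subseteq> I \<Longrightarrow> i \<in> \<Omega> \<Longrightarrow> tight m V \<Omega> \<Longrightarrow> u \<in> vec.span (\<Union>j\<in>\<Omega>-{i}. V j)"
proof (cases "\<exists>\<Omega>\<subseteq>I. i \<in> \<Omega> \<and> tight m V \<Omega>")
  case False
  have "\<not> V i \<subseteq> {0}" using Vi(2) vec.dim_eq_0[of "V i"] by linarith
  with False that show ?thesis by blast
next
  case True
  then obtain \<Omega> where "\<Omega> \<subseteq> I" "i \<in> \<Omega>" "tight m V \<Omega>" by blast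
  then obtain \<Omega>\<^sub>0 where \<Omega>\<^sub>0: "\<Omega>\<^sub>0 \<subseteq> I" "i \<in> \<Omega>\<^sub>0" "tight m V \<Omega>\<^sub>0"
    and least: "\<And>\<Omega>. \<Omega> \<subseteq> I \<Longrightarrow> i \<in> \<Omega> \<Longrightarrow> tight m V \<Omega> \<Longrightarrow> \<Omega>\<^sub>0 \<subseteq> \<Omega>"
    using dim_hall_least_tight[OF hall \<open>finite I\<close>] by blast
  have "finite \<Omega>\<^sub>0" using \<Omega>\<^sub>0(1) \<open>finite I\<close> finite_subset by blast
  then obtain u where u: "u \<in> V i" "u \<noteq> 0" "u \<in> vec.span (\<Union>j\<in>\<Omega>\<^sub>0-{i}. V j)"
    using tight_meets_span_of_others[OF hall \<Omega>\<^sub>0(1) _ \<Omega>\<^sub>0(2,3) Vi] by blast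
  have "u \<in> vec.span (\<Union>j\<in>\<Omega>-{i}. V j)" if "\<Omega> \<subseteq> I" "i \<in> \<Omega>" "tight m V \<Omega>" for \<Omega>
  proof -
    have "(\<Union>j\<in>\<Omega>\<^sub>0-{i}. V j) \<subseteq> (\<Union>j\<in>\<Omega>-{i}. V j)" using least[OF that] by blast
    then show ?thesis using u(3) vec.span_mono by blast
  qed
  with u(1,2) that show ?thesis by blast
qed

lemma dim_hall_fun_upd:
  assumes hall: "dim_hall m I V" and cover: "V i \<subseteq> vec.span (insert u H)"
    and u: "\<And>\<Omega>. \<Omega> \<subseteq> I \<Longrightarrow> i \<in> \<Omega> \<Longrightarrow> tight m V \<Omega> \<Longrightarrow> u \<in> vec.span (\<Union>j\<in>\<Omega>-{i}. V j)"
  shows "dim_hall m I (V(i := H))"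
  unfolding dim_hall_def
proof (intro allI impI)
  fix \<Omega> assume \<Omega>: "\<Omega> \<subseteq> I" "\<Omega> \<noteq> {}"
  define X where "X = (\<Union>j\<in>\<Omega>. (V(i := H)) j)"
  have old: "m + card \<Omega> \<le> vec.dim (\<Union>j\<in>\<Omega>. V j)" using dim_hallD[OF hall \<Omega>] .
  show "m + card \<Omega> \<le> vec.dim X"
  proof (cases "i \<in> \<Omega>")
    case False
    then have "X = (\<Union>j\<in>\<Omega>. V j)" unfolding X_def by auto
    with old show ?thesis by simp
  next
    case True
    have rest: "(\<Union>j\<in>\<Omega>-{i}. V j) \<subseteq> X" unfolding X_def by auto
    have "H \<subseteq> X" unfolding X_def using True by (metis UN_upper fun_upd_same)
    then have "vec.span (insert u H) \<subseteq> vec.span (insert u X)" by (intro vec.span_mono) blast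
    with cover have "V i \<subseteq> vec.span (insert u X)" by blast
    moreover have "(\<Union>j\<in>\<Omega>-{i}. V j) \<subseteq> vec.span (insert u X)"
      using rest vec.span_superset[of "insert u X"] by blast
    ultimately have "(\<Union>j\<in>\<Omega>. V j) \<subseteq> vec.span (insert u X)" by blast
    then have le: "vec.dim (\<Union>j\<in>\<Omega>. V j) \<le> vec.dim (insert u X)"
      using vec.dim_subset vec.dim_span by metis
    show ?thesis
    proof (cases "tight m V \<Omega>")
      case True
      then have "u \<in> vec.span (\<Union>j\<in>\<Omega>-{i}. V j)" using u \<Omega>(1) \<open>i \<in> \<Omega>\<close> by blast
      then have "u \<in> vec.span X" using rest vec.span_mono by blast
      then show ?thesis using le old by (simp add: vec.dim_insert)
    next
      case False
      then have "m + card \<Omega> < vec.dim (\<Union>j\<in>\<Omega>. V j)" using old unfolding tight_def by simp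
      moreover have "vec.dim (insert u X) \<le> vec.dim X + 1" by (simp add: vec.dim_insert)
      ultimately show ?thesis using le by linarith
    qed
  qed
qed

lemma dim_hall_shrink:
  assumes hall: "dim_hall m I V" and "finite I"
    and Vi: "vec.subspace (V i)" "m + 1 < vec.dim (V i)"
  obtains H where "vec.subspace H" "H \<subseteq> V i" "vec.dim H < vec.dim (V i)" "dim_hall m I (V(i := H))"
proof -
  obtain u where u: "u \<in> V i" "u \<noteq> 0"
    "\<And>\<Omega>. \<Omega> \<subseteq> I \<Longrightarrow> i \<in> \<Omega> \<Longrightarrow> tight m V \<Omega> \<Longrightarrow> u \<in> vec.span (\<Union>j\<in>\<Omega>-{i}. V j)"
    using dim_hall_common_vector[OF hall \<open>finite I\<close> Vi] by blast
  obtain H where H: "vec.subspace H" "H \<subseteq> V i" "u \<notin> H" "V i \<subseteq> vec.span (insert u H)"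
    using subspace_split_off_vector[OF Vi(1) u(1,2)] by blast
  have "vec.span H = H" "vec.span (V i) = V i" using H(1) Vi(1) vec.span_eq_iff by blast+
  then have "vec.span H \<subset> vec.span (V i)" using H(2,3) u(1) by blast
  then have "vec.dim H < vec.dim (V i)" by (rule vec.dim_psubset)
  with H that dim_hall_fun_upd[OF hall H(4) u(3)] show ?thesis by blast
qed

lemma dim_hall_reduce:
  fixes V :: "'i \<Rightarrow> ('a::field ^ 'n) set"
  assumes "finite I" "\<forall>i\<in>I. vec.subspace (V i)" "dim_hall m I V"
  shows "\<exists>V'. (\<forall>i\<in>I. vec.subspace (V' i) \<and> V' i \<subseteq> V i) \<and> dim_hall m I V' \<and>
           (\<forall>i\<in>I. vec.dim (V' i) = m + 1)"
  using assms(2,3)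
proof (induction "\<Sum>j\<in>I. vec.dim (V j)" arbitrary: V rule: less_induct)
  case less
  show ?case
  proof (cases "\<forall>i\<in>I. vec.dim (V i) = m + 1")
    case True
    with less.prems show ?thesis by blast
  next
    case False
    then obtain i where i: "i \<in> I" "vec.dim (V i) \<noteq> m + 1" by blast
    have "m + card {i} \<le> vec.dim (\<Union>j\<in>{i}. V j)" using dim_hallD[OF less.prems(2)] i(1) by blast
    with i have "m + 1 < vec.dim (V i)" by simp
    then obtain H where H: "vec.subspace H" "H \<subseteq> V i" "vec.dim H < vec.dim (V i)"
        "dim_hall m I (V(i := H))"
      using dim_hall_shrink[OF less.prems(2) assms(1)] less.prems(1) i(1) by blast
    have "(\<Sum>j\<in>I. vec.dim ((V(i := H)) j)) < (\<Sum>j\<in>I. vec.dim (V j))"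
      using H(3) i(1) assms(1) by (simp add: sum.remove)
    moreover have "\<forall>j\<in>I. vec.subspace ((V(i := H)) j)" using less.prems(1) H(1) by simp
    ultimately obtain V' where "\<forall>j\<in>I. vec.subspace (V' j) \<and> V' j \<subseteq> (V(i := H)) j"
        "dim_hall m I V'" "\<forall>j\<in>I. vec.dim (V' j) = m + 1"
      using less.hyps H(4) by blast
    moreover have "(V(i := H)) j \<subseteq> V j" for j using H(2) by simp
    ultimately show ?thesis by blast
  qed
qed

theorem mainTheorem10:
  fixes V :: "nat \<Rightarrow> ('a::{field,finite} ^ 'n) set" and k :: nat
  assumes "k \<le> CARD('n)"
    and "\<forall>i\<in>{1..k}. vec.subspace (V i)"
    and "\<forall>\<Omega>. \<Omega> \<subseteq> {1..k} \<and> \<Omega> \<noteq> {} \<longrightarrow>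
           vec.dim (vec.span (\<Union>i\<in>\<Omega>. V i)) \<ge> CARD('n) - k + card \<Omega>"
  shows "\<exists>V' :: nat \<Rightarrow> ('a ^ 'n) set.
           (\<forall>i\<in>{1..k}. vec.subspace (V' i) \<and> V' i \<subseteq> V i) \<and>
           (\<forall>\<Omega>. \<Omega> \<subseteq> {1..k} \<and> \<Omega> \<noteq> {} \<longrightarrow>
              vec.dim (vec.span (\<Union>i\<in>\<Omega>. V' i)) \<ge> CARD('n) - k + card \<Omega>) \<and>
           (\<forall>i\<in>{1..k}. vec.dim (V' i) = CARD('n) - k + 1)"
proof -
  have "dim_hall (CARD('n) - k) {1..k} V" using assms(3) unfolding dim_hall_def by simp
  then obtain V' where "\<forall>i\<in>{1..k}. vec.subspace (V' i) \<and> V' i \<subseteq> V i"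
      and "dim_hall (CARD('n) - k) {1..k} V'" and "\<forall>i\<in>{1..k}. vec.dim (V' i) = CARD('n) - k + 1"
    using dim_hall_reduce[OF finite_atLeastAtMost assms(2)] by blast
  then show ?thesis unfolding dim_hall_def vec.dim_span by blast
qed

end
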